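(* Let $\Sigma=(\mathbb{N}_0,X,U,\mathscr{U},\phi)$ be a control system as in the standing setup (in particular $\mathscr U$ is a compact metrizable space and $\phi$ is continuous), and let $Q\subset X$ be a compact control set with nonempty interior. Then the following are equivalent: (1) $Q$ is equi-invariant; (2) $Q$ is finitely equi-invariant; (3) $Q$ has bounded invariance complexity.
   Context: Standing setup: $(X,d)$ is a metric space, $U$ is a compact metric space, and $F:X\times U\to X$ is a map such that $F_u:=F(\cdot,u)$ is continuous for every $u\in U$. Let $\mathscr U=U^{\mathbb N_0}$ with the product topology. For $\omega=(\omega_0,\omega_1,\dots)\in\mathscr U$, $x\in X$, set $\phi(0,x,\omega)=x$ and $\phi(k,x,\omega)=F_{\omega_{k-1}}\circ\cdots\circ F_{\omega_0}(x)$ for $k\ge1$. It is assumed that $\phi:\mathbb N_0\times X\times\mathscr U\to X$ is continuous. Notation: $\mathbb N=\{1,2,\dots\}$; $B(x,\delta)$ is the open ball; $d(y,Q)=\inf_{q\in Q}d(y,q)$; $B_\varepsilon(Q)=\{y:d(y,Q)<\varepsilon\}$; $\phi(A,x,\omega)=\{\phi(k,x,\omega):k\in A\}$. Control set: $D\subset X$ is a control set if (i) for every $x\in D$ there is $\omega\in\mathscr U$ with $\phi(\mathbb N_0,x,\omega)\subset D$; (ii) for every $x\in D$, $D\subset\operatorname{cl}\mathcal O^+(x)$, where $\mathcal O^+(x)=\{\phi(m,x,\omega):m\in\mathbb N_0,\omega\in\mathscr U\}$; (iii) $D$ is maximal with (i) and (ii). Equi-invariance: $x\in Q$ is a finitely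 equi-invariant point of $Q$ if for every $\varepsilon>0$ there exist $\delta>0$ and a finite set $F\subset\mathscr U$ such that for every $y\in B(x,\delta)\cap Q$ there is $\omega\in F$ with $\phi(\mathbb N_0,y,\omega)\subset B_\varepsilon(Q)$; it is an equi-invariant point if this holds with $F$ a singleton. $Q$ is (finitely) equi-invariant if every point of $Q$ is a (finitely) equi-invariant point. Invariance complexity: $Q^\varepsilon_{n,\omega}=\{x\in Q:\phi(\{0,\dots,n-1\},x,\omega)\subset B_\varepsilon(Q)\}$; $F\subset\mathscr U$ is $(n,\varepsilon,Q)$-spanning if $Q=\bigcup_{\omega\in F}Q^\varepsilon_{n,\omega}$; $r_{inv}(n,\varepsilon,Q)$ is the minimal cardinality of such $F$; $Q$ has bounded invariance complexity if for every $\varepsilon>0$ there is $C$ with $r_{inv}(n,\varepsilon,Q)\le C$ for all $n\in\mathbb N$. *)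

theory Defs
  imports "HOL-Analysis.Analysis" "HOL-Library.Extended_Nat"
begin

text \<open>Control space: sequences with values in U, with the product topology
  (the standard topology on the function type nat \<Rightarrow> 'u).\<close>
definition ctrl_space :: "'u set \<Rightarrow> (nat \<Rightarrow> 'u) set" where
  "ctrl_space U = {\<omega>. \<forall>n. \<omega> n \<in> U}"

fun phi :: "('x \<Rightarrow> 'u \<Rightarrow> 'x) \<Rightarrow> nat \<Rightarrow> 'x \<Rightarrow> (nat \<Rightarrow> 'u) \<Rightarrow> 'x" where
  "phi F 0 x \<omega> = x"
| "phi F (Suc k) x \<omega> = F (phi F k x \<omega>) (\<omega> k)"

definition control_system :: "'u::metric_space set \<Rightarrow> ('x::metric_space \<Rightarrow> 'u \<Rightarrow> 'x) \<Rightarrow> bool" where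
  "control_system U F \<longleftrightarrow> compact U
     \<and> (\<forall>u\<in>U. continuous_on UNIV (\<lambda>x. F x u))
     \<and> (\<forall>k. continuous_on (UNIV \<times> ctrl_space U) (\<lambda>p. phi F k (fst p) (snd p)))"

definition pos_orbit :: "'u set \<Rightarrow> ('x \<Rightarrow> 'u \<Rightarrow> 'x) \<Rightarrow> 'x \<Rightarrow> 'x set" where
  "pos_orbit U F x = {phi F m x \<omega> | m \<omega>. \<omega> \<in> ctrl_space U}"

definition ctrl_set_props :: "'u set \<Rightarrow> ('x::topological_space \<Rightarrow> 'u \<Rightarrow> 'x) \<Rightarrow> 'x set \<Rightarrow> bool" where
  "ctrl_set_props U F D \<longleftrightarrow>
     (\<forall>x\<in>D. \<exists>\<omega>\<in>ctrl_space U. \<forall>k. phi F k x \<omega> \<in> D)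
   \<and> (\<forall>x\<in>D. D \<subseteq> closure (pos_orbit U F x))"

definition control_set :: "'u set \<Rightarrow> ('x::topological_space \<Rightarrow> 'u \<Rightarrow> 'x) \<Rightarrow> 'x set \<Rightarrow> bool" where
  "control_set U F D \<longleftrightarrow> ctrl_set_props U F D
     \<and> (\<forall>D'. D \<subseteq> D' \<and> ctrl_set_props U F D' \<longrightarrow> D' = D)"

definition fin_equi_inv_point :: "'u set \<Rightarrow> ('x::metric_space \<Rightarrow> 'u \<Rightarrow> 'x) \<Rightarrow> 'x set \<Rightarrow> 'x \<Rightarrow> bool" where
  "fin_equi_inv_point U F Q x \<longleftrightarrow> (\<forall>\<epsilon>>0. \<exists>\<delta>>0. \<exists>S. finite S \<and> S \<subseteq> ctrl_space U \<and>
     (\<forall>y\<in>ball x \<delta> \<inter> Q. \<exists>\<omega>\<in>S. \<forall>k. infdist (phi F k y \<omega>) Q < \<epsilon>))"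

definition equi_inv_point :: "'u set \<Rightarrow> ('x::metric_space \<Rightarrow> 'u \<Rightarrow> 'x) \<Rightarrow> 'x set \<Rightarrow> 'x \<Rightarrow> bool" where
  "equi_inv_point U F Q x \<longleftrightarrow> (\<forall>\<epsilon>>0. \<exists>\<delta>>0. \<exists>\<omega>\<in>ctrl_space U.
     (\<forall>y\<in>ball x \<delta> \<inter> Q. \<forall>k. infdist (phi F k y \<omega>) Q < \<epsilon>))"

definition fin_equi_invariant :: "'u set \<Rightarrow> ('x::metric_space \<Rightarrow> 'u \<Rightarrow> 'x) \<Rightarrow> 'x set \<Rightarrow> bool" where
  "fin_equi_invariant U F Q \<longleftrightarrow> (\<forall>x\<in>Q. fin_equi_inv_point U F Q x)"

definition equi_invariant :: "'u set \<Rightarrow> ('x::metric_space \<Rightarrow> 'u \<Rightarrow> 'x) \<Rightarrow> 'x set \<Rightarrow> bool" where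
  "equi_invariant U F Q \<longleftrightarrow> (\<forall>x\<in>Q. equi_inv_point U F Q x)"

definition Qset :: "('x::metric_space \<Rightarrow> 'u \<Rightarrow> 'x) \<Rightarrow> 'x set \<Rightarrow> real \<Rightarrow> nat \<Rightarrow> (nat \<Rightarrow> 'u) \<Rightarrow> 'x set" where
  "Qset F Q \<epsilon> n \<omega> = {x\<in>Q. \<forall>k<n. infdist (phi F k x \<omega>) Q < \<epsilon>}"

definition spanning :: "'u set \<Rightarrow> ('x::metric_space \<Rightarrow> 'u \<Rightarrow> 'x) \<Rightarrow> nat \<Rightarrow> real \<Rightarrow> 'x set \<Rightarrow> (nat \<Rightarrow> 'u) set \<Rightarrow> bool" where
  "spanning U F n \<epsilon> Q S \<longleftrightarrow> S \<subseteq> ctrl_space U \<and> Q = (\<Union>\<omega>\<in>S. Qset F Q \<epsilon> n \<omega>)"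

definition r_inv :: "'u set \<Rightarrow> ('x::metric_space \<Rightarrow> 'u \<Rightarrow> 'x) \<Rightarrow> nat \<Rightarrow> real \<Rightarrow> 'x set \<Rightarrow> enat" where
  "r_inv U F n \<epsilon> Q = (INF S\<in>{S. spanning U F n \<epsilon> Q S}. (if finite S then enat (card S) else \<infinity>))"

definition bounded_inv_complexity :: "'u set \<Rightarrow> ('x::metric_space \<Rightarrow> 'u \<Rightarrow> 'x) \<Rightarrow> 'x set \<Rightarrow> bool" where
  "bounded_inv_complexity U F Q \<longleftrightarrow> (\<forall>\<epsilon>>0. \<exists>C::nat. \<forall>n\<ge>1. r_inv U F n \<epsilon> Q \<le> enat C)"

end

theory Submission
  imports Defs
begin

text \<open>Equi-invariance trivially implies finite equi-invariance. Conversely, at an interior point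
  of \<open>Q\<close> finitely many controls keep a neighbourhood close to \<open>Q\<close>; the corresponding closed
  sets cannot all have empty interior, so a single control does so on an open set \<open>V \<subseteq> Q\<close>.
  Every \<open>x \<in> Q\<close> can be steered into \<open>V\<close>, along a trajectory that by maximality of the control
  set never leaves \<open>Q\<close>, and by continuity the points near \<open>x\<close> follow it.

  For compact \<open>Q\<close>, both finite equi-invariance and bounded invariance complexity are equivalent
  to the existence, for each \<open>\<epsilon>\<close>, of one finite set of controls keeping every point of \<open>Q\<close>
  \<open>\<epsilon>\<close>-close to \<open>Q\<close> forever: from local to global by compactness of \<open>Q\<close>, and from spanning
  sets of bounded size for every length to a single such set by compactness of the control
  space.\<close>

section \<open>Controls and trajectories\<close>

definition ctrl_concat :: "nat \<Rightarrow> (nat \<Rightarrow> 'u) \<Rightarrow> (nat \<Rightarrow> 'u) \<Rightarrow> nat \<Rightarrow> 'u" where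
  "ctrl_concat m a b = (\<lambda>i. if i < m then a i else b (i - m))"

lemma ctrl_concat_in_ctrl_space:
  "a \<in> ctrl_space U \<Longrightarrow> b \<in> ctrl_space U \<Longrightarrow> ctrl_concat m a b \<in> ctrl_space U"
  by (auto simp: ctrl_concat_def ctrl_space_def)

lemma shift_in_ctrl_space: "w \<in> ctrl_space U \<Longrightarrow> (\<lambda>i. w (i + m)) \<in> ctrl_space U"
  by (simp add: ctrl_space_def)

lemma phi_cong: "(\<And>i. i < k \<Longrightarrow> a i = b i) \<Longrightarrow> phi F k x a = phi F k x b"
  by (induction k) auto

lemma phi_ctrl_concat_le: "k \<le> m \<Longrightarrow> phi F k x (ctrl_concat m a b) = phi F k x a"
  by (rule phi_cong) (auto simp: ctrl_concat_def)

lemma phi_ctrl_concat_add: "phi F (j + m) x (ctrl_concat m a b) = phi F j (phi F m x a) b"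
  by (induction j) (simp_all add: phi_ctrl_concat_le, simp add: ctrl_concat_def)

lemma phi_add: "phi F (j + m) x w = phi F j (phi F m x w) (\<lambda>i. w (i + m))"
  by (induction j) auto

lemma continuous_on_phi:
  assumes cs: "control_system U F" and w: "w \<in> ctrl_space U"
  shows "continuous_on UNIV (\<lambda>x. phi F k x w)"
proof (induction k)
  case 0
  then show ?case by (simp add: continuous_on_id)
next
  case (Suc k)
  have "continuous_on UNIV (\<lambda>z. F z (w k))"
    using cs w by (simp add: control_system_def ctrl_space_def)
  with Suc.IH show ?case
    using continuous_on_compose2 by fastforce
qed

lemma compact_ctrl_space:
  assumes "compact U"
  shows "compact (ctrl_space U)"
proof -
  have "ctrl_space U = PiE UNIV (\<lambda>_. U)"
    by (auto simp: ctrl_space_def PiE_UNIV_domain Pi_iff)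
  then show ?thesis
    using compactin_PiE[of "\<lambda>_. euclidean" UNIV "\<lambda>_. U"] assms
    by (simp add: euclidean_product_topology)
qed

section \<open>Reachability inside a control set\<close>

lemma phi_in_pos_orbit: "w \<in> ctrl_space U \<Longrightarrow> phi F k x w \<in> pos_orbit U F x"
  unfolding pos_orbit_def by blast

lemma pos_orbit_trans:
  assumes "z \<in> pos_orbit U F x" and "y \<in> pos_orbit U F z"
  shows "y \<in> pos_orbit U F x"
proof -
  obtain m a where a: "z = phi F m x a" "a \<in> ctrl_space U"
    using assms(1) by (auto simp: pos_orbit_def)
  obtain n b where b: "y = phi F n z b" "b \<in> ctrl_space U"
    using assms(2) by (auto simp: pos_orbit_def)
  have "y = phi F (n + m) x (ctrl_concat m a b)"
    using a b by (simp add: phi_ctrl_concat_add)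
  then show ?thesis
    using phi_in_pos_orbit ctrl_concat_in_ctrl_space[OF a(2) b(2)] by metis
qed

lemma closure_pos_orbit_subset:
  assumes cs: "control_system U F" and z: "z \<in> closure (pos_orbit U F x)"
  shows "closure (pos_orbit U F z) \<subseteq> closure (pos_orbit U F x)"
proof (rule closure_minimal[OF _ closed_closure], rule subsetI)
  fix y assume "y \<in> pos_orbit U F z"
  then obtain m w where y: "y = phi F m z w" and w: "w \<in> ctrl_space U"
    by (auto simp: pos_orbit_def)
  have "(\<lambda>v. phi F m v w) ` pos_orbit U F x \<subseteq> pos_orbit U F x"
    by (intro image_subsetI pos_orbit_trans[OF _ phi_in_pos_orbit[OF w]])
  then have "(\<lambda>v. phi F m v w) ` closure (pos_orbit U F x) \<subseteq> closure (pos_orbit U F x)"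
    using image_closure_subset[OF continuous_on_subset[OF continuous_on_phi[OF cs w] subset_UNIV]
        closed_closure] closure_subset
    by (meson order_trans)
  then show "y \<in> closure (pos_orbit U F x)"
    using z y by blast
qed

lemma trajectory_segment_viable:
  assumes props: "ctrl_set_props U F Q" and w: "w \<in> ctrl_space U"
    and T: "phi F T x w \<in> Q" and j: "j \<le> T"
  shows "\<exists>\<nu>\<in>ctrl_space U. \<forall>i. phi F i (phi F j x w) \<nu> \<in> Q \<union> {phi F k x w |k. k \<le> T}"
proof -
  obtain \<mu> where \<mu>: "\<mu> \<in> ctrl_space U" "\<And>i. phi F i (phi F T x w) \<mu> \<in> Q"
    using props T by (auto simp: ctrl_set_props_def)
  define a where "a = (\<lambda>i. w (i + j))"
  define \<nu> where "\<nu> = ctrl_concat (T - j) a \<mu>"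
  have along: "phi F i (phi F j x w) a = phi F (i + j) x w" for i
    by (simp add: a_def phi_add)
  have "phi F i (phi F j x w) \<nu> \<in> Q \<union> {phi F k x w |k. k \<le> T}" for i
  proof (cases "i \<le> T - j")
    case True
    then have "phi F i (phi F j x w) \<nu> = phi F (i + j) x w"
      by (simp add: \<nu>_def phi_ctrl_concat_le along)
    with True j show ?thesis by auto
  next
    case False
    then obtain l where i: "i = l + (T - j)"
      by (metis add.commute le_add_diff_inverse nat_le_linear)
    have "phi F i (phi F j x w) \<nu> = phi F l (phi F T x w) \<mu>"
      unfolding i \<nu>_def phi_ctrl_concat_add along using j by simp
    with \<mu>(2) show ?thesis by simp
  qed
  moreover have "\<nu> \<in> ctrl_space U"
    unfolding \<nu>_def a_def by (intro ctrl_concat_in_ctrl_space shift_in_ctrl_space w \<mu>(1))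
  ultimately show ?thesis by blast
qed

lemma ctrl_set_props_Un_trajectory:
  assumes cs: "control_system U F" and props: "ctrl_set_props U F Q"
    and x: "x \<in> Q" and w: "w \<in> ctrl_space U" and T: "phi F T x w \<in> Q"
  shows "ctrl_set_props U F (Q \<union> {phi F k x w |k. k \<le> T})" (is "ctrl_set_props U F ?D")
proof -
  have Q_reach: "Q \<subseteq> closure (pos_orbit U F z)" if z: "z \<in> ?D" for z
  proof (cases "z \<in> Q")
    case True
    then show ?thesis using props by (auto simp: ctrl_set_props_def)
  next
    case False
    then obtain j where zj: "z = phi F j x w" and "j \<le> T" using z by blast
    then have "phi F T x w = phi F (T - j) z (\<lambda>i. w (i + j))"
      using phi_add[of F "T - j" j x w] by simp
    then have "phi F T x w \<in> closure (pos_orbit U F z)"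
      using phi_in_pos_orbit[OF shift_in_ctrl_space[OF w]] closure_subset by fastforce
    moreover have "Q \<subseteq> closure (pos_orbit U F (phi F T x w))"
      using props T by (auto simp: ctrl_set_props_def)
    ultimately show ?thesis
      using closure_pos_orbit_subset[OF cs] by blast
  qed
  have "?D \<subseteq> closure (pos_orbit U F z)" if "z \<in> ?D" for z
  proof -
    have "closure (pos_orbit U F x) \<subseteq> closure (pos_orbit U F z)"
      using closure_pos_orbit_subset[OF cs] Q_reach[OF that] x by blast
    moreover have "{phi F k x w |k. k \<le> T} \<subseteq> pos_orbit U F x"
      by (auto intro: phi_in_pos_orbit[OF w])
    ultimately have "{phi F k x w |k. k \<le> T} \<subseteq> closure (pos_orbit U F z)"
      by (meson closure_subset order_trans)
    with Q_reach[OF that] show ?thesis by blast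
  qed
  moreover have "\<exists>\<nu>\<in>ctrl_space U. \<forall>i. phi F i z \<nu> \<in> ?D" if z: "z \<in> ?D" for z
  proof (cases "z \<in> Q")
    case True
    then obtain \<nu> where "\<nu> \<in> ctrl_space U" "\<forall>i. phi F i z \<nu> \<in> Q"
      using props unfolding ctrl_set_props_def by blast
    then show ?thesis by blast
  next
    case False
    then obtain j where "z = phi F j x w" "j \<le> T" using z by blast
    then show ?thesis using trajectory_segment_viable[OF props w T] by blast
  qed
  ultimately show ?thesis by (simp add: ctrl_set_props_def)
qed

text \<open>A trajectory that leaves a control set and returns to it never left it: otherwise the
  control set could be enlarged by the trajectory segment, contradicting maximality.\<close>

lemma control_set_trajectory_segment:
  assumes cs: "control_system U F" and Q: "control_set U F Q"
    and x: "x \<in> Q" and w: "w \<in> ctrl_space U" and T: "phi F T x w \<in> Q" and k: "k \<le> T"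
  shows "phi F k x w \<in> Q"
proof -
  have "ctrl_set_props U F (Q \<union> {phi F j x w |j. j \<le> T})"
    using Q by (intro ctrl_set_props_Un_trajectory[OF cs _ x w T]) (simp add: control_set_def)
  then have "Q \<union> {phi F j x w |j. j \<le> T} = Q"
    using Q by (simp add: control_set_def)
  with k show ?thesis by blast
qed

section \<open>Finite equi-invariance implies equi-invariance\<close>

definition inv_cover ::
    "'u set \<Rightarrow> ('x::metric_space \<Rightarrow> 'u \<Rightarrow> 'x) \<Rightarrow> 'x set \<Rightarrow> 'x set \<Rightarrow> real \<Rightarrow> (nat \<Rightarrow> 'u) set \<Rightarrow> bool" where
  "inv_cover U F Q A \<epsilon> S \<longleftrightarrow> finite S \<and> S \<subseteq> ctrl_space U \<and>
     (\<forall>y\<in>A. \<exists>w\<in>S. \<forall>k. infdist (phi F k y w) Q < \<epsilon>)"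

lemma fin_equi_inv_point_iff:
  "fin_equi_inv_point U F Q x \<longleftrightarrow> (\<forall>\<epsilon>>0. \<exists>\<delta>>0. \<exists>S. inv_cover U F Q (ball x \<delta> \<inter> Q) \<epsilon> S)"
  by (simp add: fin_equi_inv_point_def inv_cover_def)

lemma open_meets_interior_of_finite_closed_cover:
  assumes "finite S" and "open W" and "W \<noteq> {}" and "W \<subseteq> (\<Union>i\<in>S. A i)"
    and "\<And>i. i \<in> S \<Longrightarrow> closed (A i)"
  shows "\<exists>i\<in>S. W \<inter> interior (A i) \<noteq> {}"
  using assms
proof (induction S arbitrary: W rule: finite_induct)
  case empty
  then show ?case by simp
next
  case (insert a S)
  show ?case
  proof (cases "W \<subseteq> A a")
    case True
    then have "W \<subseteq> interior (A a)"
      using insert.prems(1) by (simp add: interior_maximal)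
    then show ?thesis
      using insert.prems(2) by blast
  next
    case False
    have "\<exists>i\<in>S. (W - A a) \<inter> interior (A i) \<noteq> {}"
      using False insert.prems by (intro insert.IH) (auto intro: open_Diff)
    then show ?thesis by blast
  qed
qed

lemma closed_invariance_region:
  assumes "control_system U F" and "w \<in> ctrl_space U"
  shows "closed {y. \<forall>k. infdist (phi F k y w) Q \<le> \<epsilon>}"
  by (intro closed_Collect_all closed_Collect_le continuous_on_infdist
      continuous_on_phi[OF assms] continuous_on_const)

lemma open_region_with_single_control:
  assumes cs: "control_system U F" and q: "q \<in> interior Q"
    and fin: "fin_equi_inv_point U F Q q" and \<epsilon>: "\<epsilon> > 0"
  obtains w V where "w \<in> ctrl_space U" and "open V" and "V \<noteq> {}" and "V \<subseteq> Q"
    and "\<And>y k. y \<in> V \<Longrightarrow> infdist (phi F k y w) Q \<le> \<epsilon>"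
proof -
  obtain \<delta> S where \<delta>: "\<delta> > 0" and S: "inv_cover U F Q (ball q \<delta> \<inter> Q) \<epsilon> S"
    using fin \<epsilon> by (auto simp: fin_equi_inv_point_iff)
  define A where "A w = {y. \<forall>k. infdist (phi F k y w) Q \<le> \<epsilon>}" for w
  define W where "W = ball q \<delta> \<inter> interior Q"
  have "q \<in> W"
    using q \<delta> by (simp add: W_def)
  then have W: "open W" "W \<noteq> {}"
    by (auto simp only: W_def open_Int open_ball open_interior)
  have "W \<subseteq> (\<Union>w\<in>S. A w)"
  proof
    fix y assume "y \<in> W"
    then have "y \<in> ball q \<delta> \<inter> Q"
      using interior_subset by (auto simp: W_def)
    then obtain w where "w \<in> S" "\<forall>k. infdist (phi F k y w) Q < \<epsilon>"
      using S unfolding inv_cover_def by blast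
    then show "y \<in> (\<Union>w\<in>S. A w)"
      unfolding A_def by (blast intro: less_imp_le)
  qed
  moreover have "closed (A w)" if "w \<in> S" for w
    unfolding A_def using S that by (intro closed_invariance_region[OF cs]) (auto simp: inv_cover_def)
  moreover have "finite S"
    using S by (simp add: inv_cover_def)
  ultimately obtain w where "w \<in> S" and ne: "W \<inter> interior (A w) \<noteq> {}"
    using open_meets_interior_of_finite_closed_cover[OF _ W] by blast
  show thesis
  proof
    show "w \<in> ctrl_space U" using \<open>w \<in> S\<close> S by (auto simp: inv_cover_def)
    show "open (W \<inter> interior (A w))" using W(1) by (simp add: open_Int)
    show "W \<inter> interior (A w) \<noteq> {}" by (fact ne)
    show "W \<inter> interior (A w) \<subseteq> Q" using interior_subset by (auto simp: W_def)
    show "infdist (phi F k y w) Q \<le> \<epsilon>" if "y \<in> W \<inter> interior (A w)" for y k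
      using that interior_subset[of "A w"] by (auto simp: A_def)
  qed
qed

text \<open>Steer \<open>x\<close> into \<open>V\<close> by a trajectory that stays in \<open>Q\<close>; nearby points of \<open>Q\<close> follow it
  closely by continuity, enter \<open>V\<close> as well and are then kept close to \<open>Q\<close> by \<open>w\<close>.\<close>

lemma equi_inv_point_if_reaches_region:
  assumes cs: "control_system U F" and Q: "control_set U F Q" and x: "x \<in> Q" and \<epsilon>: "\<epsilon> > 0"
    and V: "open V" "V \<noteq> {}" "V \<subseteq> Q" and w: "w \<in> ctrl_space U"
    and inv: "\<And>y k. y \<in> V \<Longrightarrow> infdist (phi F k y w) Q < \<epsilon>"
  shows "\<exists>\<delta>>0. \<exists>\<omega>\<in>ctrl_space U. \<forall>y\<in>ball x \<delta> \<inter> Q. \<forall>k. infdist (phi F k y \<omega>) Q < \<epsilon>"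
proof -
  have "Q \<subseteq> closure (pos_orbit U F x)"
    using Q x by (auto simp: control_set_def ctrl_set_props_def)
  then have "V \<inter> pos_orbit U F x \<noteq> {}"
    using V open_Int_closure_eq_empty[OF V(1)] by blast
  then obtain T v where T: "phi F T x v \<in> V" and v: "v \<in> ctrl_space U"
    unfolding pos_orbit_def by blast
  have on_Q: "phi F k x v \<in> Q" if "k \<le> T" for k
    using control_set_trajectory_segment[OF cs Q x v _ that] T V(3) by blast
  define N where "N = (\<lambda>y. phi F T y v) -` V \<inter>
    (\<Inter>k\<in>{..T}. (\<lambda>y. phi F k y v) -` ball (phi F k x v) \<epsilon>)"
  have "open N"
    unfolding N_def by (intro open_Int open_INT finite_atMost ballI open_vimage
        continuous_on_phi[OF cs v] V(1) open_ball)
  moreover have "x \<in> N"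
    using T \<epsilon> by (simp add: N_def)
  ultimately obtain \<delta> where \<delta>: "\<delta> > 0" "ball x \<delta> \<subseteq> N"
    by (meson openE)
  define \<omega> where "\<omega> = ctrl_concat T v w"
  have "infdist (phi F k y \<omega>) Q < \<epsilon>" if y: "y \<in> N" for y k
  proof (cases "k \<le> T")
    case True
    have "infdist (phi F k y v) Q \<le> dist (phi F k y v) (phi F k x v)"
      by (rule infdist_le[OF on_Q[OF True]])
    also have "\<dots> < \<epsilon>"
      using y True by (auto simp: N_def dist_commute)
    finally show ?thesis
      using True by (simp add: \<omega>_def phi_ctrl_concat_le)
  next
    case False
    then obtain l where k: "k = l + T"
      by (metis add.commute le_add_diff_inverse nat_le_linear)
    have "phi F T y v \<in> V"
      using y by (simp add: N_def)
    then show ?thesis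
      using inv by (simp add: k \<omega>_def phi_ctrl_concat_add)
  qed
  then show ?thesis
    using \<delta> ctrl_concat_in_ctrl_space[OF v w] unfolding \<omega>_def by blast
qed

lemma fin_equi_invariant_imp_equi_invariant:
  assumes cs: "control_system U F" and Q: "control_set U F Q" and int: "interior Q \<noteq> {}"
    and fin: "fin_equi_invariant U F Q"
  shows "equi_invariant U F Q"
  unfolding equi_invariant_def equi_inv_point_def
proof (intro ballI allI impI)
  fix x and \<epsilon> :: real
  assume x: "x \<in> Q" and \<epsilon>: "\<epsilon> > 0"
  obtain q where q: "q \<in> interior Q"
    using int by blast
  then have "fin_equi_inv_point U F Q q"
    using fin interior_subset by (auto simp: fin_equi_invariant_def)
  then obtain w V where "w \<in> ctrl_space U" "open V" "V \<noteq> {}" "V \<subseteq> Q"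
      and inv: "\<And>y k. y \<in> V \<Longrightarrow> infdist (phi F k y w) Q \<le> \<epsilon> / 2"
    using open_region_with_single_control[OF cs q, of "\<epsilon> / 2"] \<epsilon> by auto
  moreover have "infdist (phi F k y w) Q < \<epsilon>" if "y \<in> V" for y k
    using inv[OF that, of k] \<epsilon> by linarith
  ultimately show "\<exists>\<delta>>0. \<exists>\<omega>\<in>ctrl_space U. \<forall>y\<in>ball x \<delta> \<inter> Q. \<forall>k. infdist (phi F k y \<omega>) Q < \<epsilon>"
    using equi_inv_point_if_reaches_region[OF cs Q x \<epsilon>] by blast
qed

section \<open>Finite equi-invariance and bounded invariance complexity\<close>

lemma inv_cover_subset:
  "A \<subseteq> B \<Longrightarrow> inv_cover U F Q B \<epsilon> S \<Longrightarrow> inv_cover U F Q A \<epsilon> S"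
  by (auto simp: inv_cover_def)

lemma inv_cover_UN:
  assumes "finite I" and "\<And>i. i \<in> I \<Longrightarrow> inv_cover U F Q (A i) \<epsilon> (S i)"
  shows "inv_cover U F Q (\<Union>i\<in>I. A i) \<epsilon> (\<Union>i\<in>I. S i)"
  using assms by (fastforce simp: inv_cover_def)

lemma fin_equi_invariant_imp_inv_cover:
  assumes "compact Q" and "fin_equi_invariant U F Q" and "\<epsilon> > 0"
  shows "\<exists>S. inv_cover U F Q Q \<epsilon> S"
proof -
  have "\<forall>x\<in>Q. \<exists>\<delta>>0. \<exists>S. inv_cover U F Q (ball x \<delta> \<inter> Q) \<epsilon> S"
    using assms(2,3) by (auto simp: fin_equi_invariant_def fin_equi_inv_point_iff)
  then obtain \<delta> S where \<delta>: "\<And>x. x \<in> Q \<Longrightarrow> \<delta> x > 0"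
    and S: "\<And>x. x \<in> Q \<Longrightarrow> inv_cover U F Q (ball x (\<delta> x) \<inter> Q) \<epsilon> (S x)"
    by metis
  have "Q \<subseteq> (\<Union>x\<in>Q. ball x (\<delta> x))"
    using \<delta> by force
  then obtain Q0 where Q0: "Q0 \<subseteq> Q" "finite Q0" "Q \<subseteq> (\<Union>x\<in>Q0. ball x (\<delta> x))"
    using compactE_image[OF assms(1), of Q "\<lambda>x. ball x (\<delta> x)"] by blast
  then have "inv_cover U F Q (\<Union>x\<in>Q0. ball x (\<delta> x) \<inter> Q) \<epsilon> (\<Union>x\<in>Q0. S x)"
    using S by (intro inv_cover_UN) auto
  with Q0(3) show ?thesis
    by (intro exI[of _ "\<Union>x\<in>Q0. S x"] inv_cover_subset[of Q]) auto
qed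

lemma inv_cover_imp_fin_equi_invariant:
  assumes "\<And>\<epsilon>. \<epsilon> > 0 \<Longrightarrow> \<exists>S. inv_cover U F Q Q \<epsilon> S"
  shows "fin_equi_invariant U F Q"
  unfolding fin_equi_invariant_def fin_equi_inv_point_iff
  using assms inv_cover_subset[OF Int_lower2] zero_less_one by blast

lemma spanning_if_inv_cover: "inv_cover U F Q Q \<epsilon> S \<Longrightarrow> spanning U F n \<epsilon> Q S"
  unfolding inv_cover_def spanning_def Qset_def by blast

lemma r_inv_le_card: "spanning U F n \<epsilon> Q S \<Longrightarrow> finite S \<Longrightarrow> r_inv U F n \<epsilon> Q \<le> enat (card S)"
  unfolding r_inv_def by (metis (mono_tags, lifting) INF_lower mem_Collect_eq)

lemma r_inv_le_enatE:
  assumes "r_inv U F n \<epsilon> Q \<le> enat C"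
  obtains S where "spanning U F n \<epsilon> Q S" and "finite S" and "card S \<le> C"
proof -
  define c where "c S = (if finite S then enat (card S) else \<infinity>)" for S :: "(nat \<Rightarrow> 'a) set"
  have "{S. spanning U F n \<epsilon> Q S} \<noteq> {}"
  proof
    assume "{S. spanning U F n \<epsilon> Q S} = {}"
    then have "r_inv U F n \<epsilon> Q = \<infinity>"
      by (simp only: r_inv_def INF_empty top_enat_def)
    with assms show False by simp
  qed
  then have "r_inv U F n \<epsilon> Q \<in> c ` {S. spanning U F n \<epsilon> Q S}"
    unfolding r_inv_def c_def by (blast intro: wellorder_InfI)
  then obtain S where "spanning U F n \<epsilon> Q S" "c S \<le> enat C"
    using assms by auto
  then show thesis
    using that by (auto simp: c_def split: if_splits)
qed

lemma inv_cover_imp_bounded_inv_complexity: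
  assumes "\<And>\<epsilon>. \<epsilon> > 0 \<Longrightarrow> \<exists>S. inv_cover U F Q Q \<epsilon> S"
  shows "bounded_inv_complexity U F Q"
  unfolding bounded_inv_complexity_def
proof (intro allI impI)
  fix \<epsilon> :: real
  assume "\<epsilon> > 0"
  then obtain S where S: "inv_cover U F Q Q \<epsilon> S"
    using assms by blast
  then have "r_inv U F n \<epsilon> Q \<le> enat (card S)" for n
    by (intro r_inv_le_card spanning_if_inv_cover) (simp_all add: inv_cover_def)
  then show "\<exists>C. \<forall>n\<ge>1. r_inv U F n \<epsilon> Q \<le> enat C"
    by blast
qed

lemma finite_set_enumeration:
  assumes "finite A" and "card A \<le> C" and "a \<in> A"
  obtains g where "\<And>i. g i \<in> A" and "A \<subseteq> g ` {..<C}"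
proof -
  obtain h where h: "bij_betw h {..<card A} A"
    using ex_bij_betw_nat_finite[OF assms(1)] by (auto simp: atLeast0LessThan)
  define g where "g i = (if i < card A then h i else a)" for i
  have "\<And>i. g i \<in> A"
    using h assms(3) by (auto simp: g_def bij_betw_def)
  moreover have "A = g ` {..<card A}"
    using h by (auto simp: g_def bij_betw_def)
  then have "A \<subseteq> g ` {..<C}"
    using assms(2) by (metis image_mono lessThan_subset_iff)
  ultimately show thesis by (rule that)
qed

lemma spanning_cover:
  assumes "spanning U F n \<epsilon> Q S" and "y \<in> Q"
  obtains w where "w \<in> S" and "y \<in> Qset F Q \<epsilon> n w"
proof -
  have "Q \<subseteq> (\<Union>w\<in>S. Qset F Q \<epsilon> n w)"
    using assms(1) unfolding spanning_def by (elim conjE equalityE)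
  with assms(2) that show thesis by blast
qed

lemma spanning_enumeration:
  assumes S: "spanning U F n \<epsilon> Q S" "finite S" "card S \<le> C" and "y0 \<in> Q"
  shows "\<exists>g. (\<forall>i. g i \<in> ctrl_space U) \<and> (\<forall>y\<in>Q. \<exists>i<C. y \<in> Qset F Q \<epsilon> n (g i))"
proof -
  obtain w where "w \<in> S"
    using spanning_cover[OF S(1) \<open>y0 \<in> Q\<close>] by blast
  then obtain g where g: "\<And>i. g i \<in> S" "S \<subseteq> g ` {..<C}"
    using finite_set_enumeration[OF S(2,3)] by blast
  have "\<exists>i<C. y \<in> Qset F Q \<epsilon> n (g i)" if "y \<in> Q" for y
    using spanning_cover[OF S(1) that] g(2) by blast
  moreover have "S \<subseteq> ctrl_space U"
    using S(1) unfolding spanning_def by blast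
  ultimately show ?thesis
    using g(1) by blast
qed

lemma bounded_seq_constant_subseq:
  fixes f :: "nat \<Rightarrow> nat"
  assumes "\<And>m. f m < C"
  obtains i and s :: "nat \<Rightarrow> nat" where "i < C" and "strict_mono s" and "\<And>m. f (s m) = i"
proof -
  have "\<exists>i\<in>{..<C}. infinite {m \<in> UNIV. f m = i}"
    using assms by (intro pigeonhole_infinite_rel) auto
  then obtain i where i: "i < C" "infinite {m. f m = i}"
    by auto
  obtain s :: "nat \<Rightarrow> nat" where "strict_mono s" "\<forall>m. s m \<in> {m. f m = i}"
    using infinite_enumerate[OF i(2)] by blast
  with i(1) show thesis
    using that by simp
qed

lemma infdist_phi_le_of_tendsto:
  assumes cs: "control_system U F" and ws: "\<And>m. ws m \<in> ctrl_space U"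
    and w: "w \<in> ctrl_space U" and lim: "ws \<longlonglongrightarrow> w"
    and ns: "\<And>m. m \<le> ns m" and y: "\<And>m. y \<in> Qset F Q \<epsilon> (ns m) (ws m)"
  shows "infdist (phi F k y w) Q \<le> \<epsilon>"
proof -
  have "continuous_on (UNIV \<times> ctrl_space U) (\<lambda>p. phi F k (fst p) (snd p))"
    using cs by (simp add: control_system_def)
  then have "(\<lambda>m. phi F k y (ws m)) \<longlonglongrightarrow> phi F k y w"
    using continuous_on_tendsto_compose[OF _ tendsto_Pair[OF tendsto_const lim], of _ "\<lambda>p. phi F k (fst p) (snd p)"]
      ws w by simp
  then have "(\<lambda>m. infdist (phi F k y (ws m)) Q) \<longlonglongrightarrow> infdist (phi F k y w) Q"
    by (rule tendsto_infdist)
  moreover have "infdist (phi F k y (ws m)) Q \<le> \<epsilon>" if "m \<ge> Suc k" for m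
    using y[of m] ns[of m] that by (auto simp: Qset_def less_imp_le)
  ultimately show ?thesis
    by (blast intro: LIMSEQ_le_const2)
qed

lemma limit_controls_keep_close:
  fixes C :: nat and r :: "nat \<Rightarrow> nat"
  assumes cs: "control_system U F" and G: "\<And>n i. G n i \<in> ctrl_space U" and r: "strict_mono r"
    and lim: "\<And>i. (\<lambda>m. G (r m) i) \<longlonglongrightarrow> l i" and l: "\<And>i. l i \<in> ctrl_space U"
    and cover: "\<And>n. \<exists>i<C. y \<in> Qset F Q \<epsilon> (Suc n) (G n i)"
  shows "\<exists>i<C. \<forall>k. infdist (phi F k y (l i)) Q \<le> \<epsilon>"
proof -
  obtain I where I: "\<And>n. I n < C" "\<And>n. y \<in> Qset F Q \<epsilon> (Suc n) (G n (I n))"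
    using cover by (metis choice)
  obtain i and s :: "nat \<Rightarrow> nat" where "i < C" and s: "strict_mono s" "\<And>m. I (r (s m)) = i"
    using bounded_seq_constant_subseq[of "\<lambda>m. I (r m)" C] I(1) by blast
  have "infdist (phi F k y (l i)) Q \<le> \<epsilon>" for k
  proof (rule infdist_phi_le_of_tendsto[OF cs G l, where ns = "\<lambda>m. Suc (r (s m))"])
    show "(\<lambda>m. G (r (s m)) i) \<longlonglongrightarrow> l i"
      using LIMSEQ_subseq_LIMSEQ[OF lim s(1)] by (simp add: o_def)
    show "m \<le> Suc (r (s m))" for m
      using seq_suble[OF s(1), of m] seq_suble[OF r, of "s m"] by simp
    show "y \<in> Qset F Q \<epsilon> (Suc (r (s m))) (G (r (s m)) i)" for m
      using I(2)[of "r (s m)"] s(2)[of m] by simp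
  qed
  with \<open>i < C\<close> show ?thesis by blast
qed

text \<open>Bounded spanning sets for every length are enumerated by a fixed number of controls;
  a convergent subsequence of these enumerations yields finitely many controls that keep
  every point close to the control set forever.\<close>

lemma uniform_controls_of_bounded_spanning:
  assumes cs: "control_system U F" and "y0 \<in> Q"
    and span: "\<And>n. \<exists>S. spanning U F (Suc n) \<epsilon> Q S \<and> finite S \<and> card S \<le> C"
  obtains S where "finite S" and "S \<subseteq> ctrl_space U"
    and "\<forall>y\<in>Q. \<exists>w\<in>S. \<forall>k. infdist (phi F k y w) Q \<le> \<epsilon>"
proof -
  have "\<exists>G. (\<forall>i. G i \<in> ctrl_space U) \<and> (\<forall>y\<in>Q. \<exists>i<C. y \<in> Qset F Q \<epsilon> (Suc n) (G i))" for n
    using span[of n] spanning_enumeration \<open>y0 \<in> Q\<close> by metis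
  then obtain G where G: "\<And>n i. G n i \<in> ctrl_space U"
    and cover: "\<And>n y. y \<in> Q \<Longrightarrow> \<exists>i<C. y \<in> Qset F Q \<epsilon> (Suc n) (G n i)"
    by metis
  have "compact (ctrl_space (ctrl_space U))"
    using cs by (simp add: compact_ctrl_space control_system_def)
  moreover have "\<forall>n. G n \<in> ctrl_space (ctrl_space U)"
    using G by (simp add: ctrl_space_def)
  ultimately obtain l r where l: "l \<in> ctrl_space (ctrl_space U)" and r: "strict_mono r"
    and lim: "(G \<circ> r) \<longlonglongrightarrow> l"
    using seq_compactE[OF compact_imp_seq_compact] by blast
  have lim_i: "(\<lambda>m. G (r m) i) \<longlonglongrightarrow> l i" for i
    using continuous_on_tendsto_compose[OF continuous_on_product_coordinates[of i] lim]
    by (simp add: o_def)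
  have "\<exists>i<C. \<forall>k. infdist (phi F k y (l i)) Q \<le> \<epsilon>" if "y \<in> Q" for y
    using l cover[OF that] by (intro limit_controls_keep_close[OF cs G r lim_i]) (auto simp: ctrl_space_def)
  then have "\<forall>y\<in>Q. \<exists>w\<in>l ` {..<C}. \<forall>k. infdist (phi F k y w) Q \<le> \<epsilon>"
    by blast
  moreover have "l ` {..<C} \<subseteq> ctrl_space U"
    using l by (auto simp: ctrl_space_def)
  ultimately show thesis
    by (intro that[of "l ` {..<C}"]) simp_all
qed

lemma bounded_inv_complexity_imp_inv_cover:
  assumes cs: "control_system U F" and bd: "bounded_inv_complexity U F Q" and \<epsilon>: "\<epsilon> > 0"
  shows "\<exists>S. inv_cover U F Q Q \<epsilon> S"
proof (cases "Q = {}")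
  case True
  then show ?thesis
    by (auto simp: inv_cover_def)
next
  case False
  then obtain y0 where "y0 \<in> Q"
    by blast
  have "\<epsilon> / 2 > 0"
    using \<epsilon> by simp
  then obtain C :: nat where C: "\<forall>n\<ge>1. r_inv U F n (\<epsilon> / 2) Q \<le> enat C"
    using bd unfolding bounded_inv_complexity_def by blast
  have span: "\<exists>S. spanning U F (Suc n) (\<epsilon> / 2) Q S \<and> finite S \<and> card S \<le> C" for n
  proof -
    have "r_inv U F (Suc n) (\<epsilon> / 2) Q \<le> enat C"
      using C by simp
    then obtain S where "spanning U F (Suc n) (\<epsilon> / 2) Q S" "finite S" "card S \<le> C"
      by (rule r_inv_le_enatE)
    then show ?thesis by blast
  qed
  obtain S where S: "finite S" "S \<subseteq> ctrl_space U"
    and close: "\<forall>y\<in>Q. \<exists>w\<in>S. \<forall>k. infdist (phi F k y w) Q \<le> \<epsilon> / 2"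
    by (rule uniform_controls_of_bounded_spanning[OF cs \<open>y0 \<in> Q\<close> span])
  have "\<exists>w\<in>S. \<forall>k. infdist (phi F k y w) Q < \<epsilon>" if "y \<in> Q" for y
  proof -
    obtain w where "w \<in> S" and w: "\<forall>k. infdist (phi F k y w) Q \<le> \<epsilon> / 2"
      using close \<open>y \<in> Q\<close> by blast
    have "infdist (phi F k y w) Q < \<epsilon>" for k
      using w[rule_format, of k] \<epsilon> by linarith
    with \<open>w \<in> S\<close> show ?thesis
      by blast
  qed
  with S show ?thesis
    by (auto simp: inv_cover_def)
qed

lemma fin_equi_invariant_iff_bounded_inv_complexity:
  assumes cs: "control_system U F" and "compact Q"
  shows "fin_equi_invariant U F Q \<longleftrightarrow> bounded_inv_complexity U F Q"
proof
  assume fin: "fin_equi_invariant U F Q"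
  show "bounded_inv_complexity U F Q"
    by (intro inv_cover_imp_bounded_inv_complexity fin_equi_invariant_imp_inv_cover[OF \<open>compact Q\<close> fin])
next
  assume bd: "bounded_inv_complexity U F Q"
  show "fin_equi_invariant U F Q"
    by (intro inv_cover_imp_fin_equi_invariant bounded_inv_complexity_imp_inv_cover[OF cs bd])
qed

lemma equi_invariant_imp_fin_equi_invariant:
  assumes "equi_invariant U F Q"
  shows "fin_equi_invariant U F Q"
  unfolding fin_equi_invariant_def fin_equi_inv_point_iff
proof (intro ballI allI impI)
  fix x and \<epsilon> :: real
  assume "x \<in> Q" and "\<epsilon> > 0"
  then obtain \<delta> w where "\<delta> > 0" "w \<in> ctrl_space U"
    and "\<forall>y\<in>ball x \<delta> \<inter> Q. \<forall>k. infdist (phi F k y w) Q < \<epsilon>"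
    using assms unfolding equi_invariant_def equi_inv_point_def by blast
  then show "\<exists>\<delta>>0. \<exists>S. inv_cover U F Q (ball x \<delta> \<inter> Q) \<epsilon> S"
    by (intro exI[of _ \<delta>] conjI exI[of _ "{w}"]) (simp_all add: inv_cover_def)
qed

theorem mainTheorem4:
  fixes U :: "'u::metric_space set" and F :: "'x::metric_space \<Rightarrow> 'u \<Rightarrow> 'x" and Q :: "'x set"
  assumes "control_system U F"
    and "compact Q" and "control_set U F Q" and "interior Q \<noteq> {}"
  shows "(equi_invariant U F Q \<longleftrightarrow> fin_equi_invariant U F Q)
       \<and> (fin_equi_invariant U F Q \<longleftrightarrow> bounded_inv_complexity U F Q)"
  using equi_invariant_imp_fin_equi_invariant[of U F Q]
    fin_equi_invariant_imp_equi_invariant[OF assms(1,3,4)]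
    fin_equi_invariant_iff_bounded_inv_complexity[OF assms(1,2)]
  by blast

end
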